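(* Let $m\ge1$, let $\mathcal{I}\subseteq\mathcal{M}_m$ be a decreasing monomial set with $r=\max_{f\in\mathcal{I}}\deg(f)$, and let $f,g\in\mathcal{I}_r$ with $h=\gcd(f,g)$ such that $\deg(h)=r-2$. Then \[ \Big|{\rm LTA}(m,2)_h\cdot h\cdot\Big({\rm LTA}(m,2)_{f} \cdot \tfrac{f}{h}+{\rm LTA}(m,2)_{g}\cdot \tfrac{g}{h}\Big)\Big|= |{\rm LTA}(m,2)_h\cdot h|\cdot \Big|{\rm LTA}(m,2)_{f} \cdot \tfrac{f}{h}+{\rm LTA}(m,2)_{g}\cdot \tfrac{g}{h}\Big|. \]
   Context: $\mathbf{R}_m=\mathbb{F}_2[x_0,\dots,x_{m-1}]/(x_0^2-x_0,\dots,x_{m-1}^2-x_{m-1})$. $\mathcal{M}_m$ is the set of monomials $x_0^{i_0}\cdots x_{m-1}^{i_{m-1}}$, $i_j\in\{0,1\}$. For a monomial $f$, $\operatorname{ind}(f)$ is the set of indices of variables dividing $f$, $\deg f=|\operatorname{ind}(f)|$; $\gcd(f,g)$ has $\operatorname{ind}=\operatorname{ind}(f)\cap\operatorname{ind}(g)$; for $h\mid f$, $f/h$ has $\operatorname{ind}=\operatorname{ind}(f)\setminus\operatorname{ind}(h)$. Order: $f\preceq_w g$ iff $\operatorname{ind}(f)\subseteq\operatorname{ind}(g)$; for equal-degree $f=x_{i_1}\cdots x_{i_s}$, $g=x_{j_1}\cdots x_{j_s}$ (increasing indices), $f\preceq_{sh}g$ iff $i_\ell\le j_\ell$ for all $\ell$;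 $f\preceq g$ iff $f\preceq_{sh}g^*\preceq_w g$ for some $g^*$. $\mathcal{I}$ is decreasing if $f\in\mathcal{I}$, $g\preceq f$ imply $g\in\mathcal{I}$; $\mathcal{I}_r=\{f\in\mathcal{I}:\deg f=r\}$. ${\rm LTA}(m,2)$ is the set of pairs $(\mathbf{B},\varepsilon)$ with $\mathbf{B}=(b_{i,j})\in\mathbb{F}_2^{m\times m}$ lower triangular with ones on the diagonal and $\varepsilon\in\mathbb{F}_2^m$; for a monomial $u$, $(\mathbf{B},\varepsilon)\cdot u\in\mathbf{R}_m$ replaces each variable $x_i$ of $u$ by $x_i+\sum_{j<i}b_{i,j}x_j+\varepsilon_i$. For a monomial $g$, ${\rm LTA}(m,2)_g$ is the set of $(\mathbf{B},\varepsilon)\in{\rm LTA}(m,2)$ with $\varepsilon_i=0$ for $i\notin\operatorname{ind}(g)$ and $b_{i,j}=0$ (for $j<i$) whenever $i\notin\operatorname{ind}(g)$ or $j\in\operatorname{ind}(g)$. For $G\subseteq{\rm LTA}(m,2)$ and monomial $u$, $G\cdot u=\{(\mathbf{B},\varepsilon)\cdot u:(\mathbf{B},\varepsilon)\in G\}$. For sets $\mathcal{S},\mathcal{T}\subseteq\mathbf{R}_m$: $\mathcal{S}+\mathcal{T}=\{s+t\}$, $\mathcal{S}\cdot\mathcal{T}=\{st\}$; $G\cdot h\cdot(\mathcal{S})$ is the product of the set $G\cdot h$ with the set $\mathcal{S}$. *)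

theory Defs
  imports Main "HOL-Library.Z2"
begin

text \<open>The ring R_m = F_2[x_0..x_{m-1}]/(x_i^2 - x_i) is represented, via the standard
  isomorphism, as the ring of F_2-valued functions on F_2^m.  A point of F_2^m is a
  function nat => bit vanishing at indices >= m; an element of R_m is a function on
  points that is 0 outside pts m (canonical representative).\<close>

type_synonym pt = "nat \<Rightarrow> bit"
type_synonym relt = "pt \<Rightarrow> bit"

definition pts :: "nat \<Rightarrow> pt set" where
  "pts m = {x. \<forall>i\<ge>m. x i = 0}"

definition canon :: "nat \<Rightarrow> relt \<Rightarrow> relt" where
  "canon m F = (\<lambda>x. if x \<in> pts m then F x else 0)"

text \<open>Monomials of M_m are represented by their index sets ind(f), subsets of {0..<m}.
  gcd is intersection, f/h is set difference, degree is card.\<close>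

definition monomials :: "nat \<Rightarrow> nat set set" where
  "monomials m = Pow {0..<m}"

definition weak_le :: "nat set \<Rightarrow> nat set \<Rightarrow> bool" where
  "weak_le f g \<longleftrightarrow> f \<subseteq> g"

definition shift_le :: "nat set \<Rightarrow> nat set \<Rightarrow> bool" where
  "shift_le f g \<longleftrightarrow> finite f \<and> finite g \<and> card f = card g \<and>
     (\<forall>l < card f. sorted_list_of_set f ! l \<le> sorted_list_of_set g ! l)"

definition mon_le :: "nat set \<Rightarrow> nat set \<Rightarrow> bool" where
  "mon_le f g \<longleftrightarrow> (\<exists>g'. shift_le f g' \<and> weak_le g' g)"

definition decreasing :: "nat \<Rightarrow> nat set set \<Rightarrow> bool" where
  "decreasing m I \<longleftrightarrow> I \<subseteq> monomials m \<and>
     (\<forall>f\<in>I. \<forall>g. mon_le g f \<longrightarrow> g \<in> I)"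

text \<open>LTA(m,2): pairs (B, eps); B is m x m lower triangular with unit diagonal,
  entries outside the m x m block fixed to the identity pattern, eps vanishes at
  indices >= m (so that distinct pairs correspond to distinct matrices/vectors).\<close>

definition LTA :: "nat \<Rightarrow> ((nat \<Rightarrow> nat \<Rightarrow> bit) \<times> (nat \<Rightarrow> bit)) set" where
  "LTA m = {(B, e). (\<forall>i j. i < j \<longrightarrow> B i j = 0) \<and> (\<forall>i. B i i = 1) \<and>
      (\<forall>i j. (m \<le> i \<or> m \<le> j) \<longrightarrow> B i j = (if i = j then 1 else 0)) \<and>
      (\<forall>i\<ge>m. e i = 0)}"

definition LTA_sub :: "nat \<Rightarrow> nat set \<Rightarrow> ((nat \<Rightarrow> nat \<Rightarrow> bit) \<times> (nat \<Rightarrow> bit)) set" where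
  "LTA_sub m g = {(B, e) \<in> LTA m. (\<forall>i. i \<notin> g \<longrightarrow> e i = 0) \<and>
      (\<forall>i j. j < i \<and> (i \<notin> g \<or> j \<in> g) \<longrightarrow> B i j = 0)}"

definition act :: "nat \<Rightarrow> (nat \<Rightarrow> nat \<Rightarrow> bit) \<times> (nat \<Rightarrow> bit) \<Rightarrow> nat set \<Rightarrow> relt" where
  "act m Be u = canon m (\<lambda>x. \<Prod>i\<in>u. x i + (\<Sum>j<i. fst Be i j * x j) + snd Be i)"

definition orbit :: "nat \<Rightarrow> ((nat \<Rightarrow> nat \<Rightarrow> bit) \<times> (nat \<Rightarrow> bit)) set \<Rightarrow> nat set \<Rightarrow> relt set" where
  "orbit m G u = (\<lambda>Be. act m Be u) ` G"

definition set_plus :: "relt set \<Rightarrow> relt set \<Rightarrow> relt set" where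
  "set_plus S T = {(\<lambda>x. s x + t x) | s t. s \<in> S \<and> t \<in> T}"

definition set_times :: "relt set \<Rightarrow> relt set \<Rightarrow> relt set" where
  "set_times S T = {(\<lambda>x. s x * t x) | s t. s \<in> S \<and> t \<in> T}"

end

theory Submission
  imports Defs
begin

text \<open>An element s of LTA(m,2)_h h is the indicator of the points whose h-coordinates satisfy
  x_i = 1 + l_i(x), with affine forms l_i in the coordinates outside h; so above every assignment
  of the coordinates outside h there is exactly one point where s = 1.  An element t of the sum set
  does not involve the h-coordinates at all.  Hence from s t = s' t' one lifts each point of the
  support of t to a point where s = 1 and reads off that t and t' have the same support, so t = t',
  and that the forms l_i of s and s' agree on the support of t.  That support is the set where
  y_1 y_2 + y_3 y_4 = 1 for four independent triangular coordinates y_k, and every point is a sum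
  of three of its points; affine forms commute with such sums, so they agree everywhere and s = s'.
  Multiplication is therefore injective on the product of the two sets.\<close>

declare add_bit_eq_xor [simp del] mult_bit_eq_and [simp del]

lemma bit_add_self [simp]: "(a::bit) + a = 0"
  by (cases a) auto

lemma bit_add_cancel_left: "(a::bit) + b + (a + b + c) = c"
  by (cases a; cases b; cases c) auto

lemma bit_mult_eq_1_iff: "(a::bit) * b = 1 \<longleftrightarrow> a = 1 \<and> b = 1"
  by (cases a; cases b) auto

lemma prod_bit_eq_1_iff: "finite A \<Longrightarrow> (\<Prod>i\<in>A. (F i::bit)) = 1 \<longleftrightarrow> (\<forall>i\<in>A. F i = 1)"
  by (induction A rule: finite_induct) (simp_all add: bit_mult_eq_1_iff)

lemma bit_eqI: "((a::bit) = 1 \<longleftrightarrow> b = 1) \<Longrightarrow> a = b"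
  by (cases a; cases b) auto

definition lta_shift :: "(nat \<Rightarrow> nat \<Rightarrow> bit) \<Rightarrow> (nat \<Rightarrow> bit) \<Rightarrow> nat \<Rightarrow> pt \<Rightarrow> bit" where
  "lta_shift B e i x = (\<Sum>j<i. B i j * x j) + e i"

definition lta_var :: "(nat \<Rightarrow> nat \<Rightarrow> bit) \<Rightarrow> (nat \<Rightarrow> bit) \<Rightarrow> nat \<Rightarrow> pt \<Rightarrow> bit" where
  "lta_var B e i x = x i + lta_shift B e i x"

lemma act_eq_prod_lta_var: "act m (B, e) u = canon m (\<lambda>x. \<Prod>i\<in>u. lta_var B e i x)"
  unfolding act_def lta_var_def lta_shift_def by (simp add: add.assoc)

lemma lta_shift_add3:
  "lta_shift B e i (\<lambda>j. x j + y j + z j) = lta_shift B e i x + lta_shift B e i y + lta_shift B e i z"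
proof -
  have "e i = e i + e i + e i" by simp
  then show ?thesis
    unfolding lta_shift_def by (simp add: distrib_left sum.distrib ac_simps)
qed

lemma lta_var_add3:
  "lta_var B e i (\<lambda>j. x j + y j + z j) = lta_var B e i x + lta_var B e i y + lta_var B e i z"
  unfolding lta_var_def lta_shift_add3 by (simp only: ac_simps)

lemma lta_var_cong_below:
  "(\<And>j. j \<le> i \<Longrightarrow> x j = y j) \<Longrightarrow> lta_var B e i x = lta_var B e i y"
  unfolding lta_var_def lta_shift_def by (auto intro!: sum.cong)

lemma lta_shift_cong_outside:
  assumes "(B, e) \<in> LTA_sub m S" and "\<forall>j. j \<notin> S \<longrightarrow> x j = y j"
  shows "lta_shift B e i x = lta_shift B e i y"
  using assms unfolding lta_shift_def LTA_sub_def
  by (intro arg_cong[where f = "\<lambda>s. s + e i"] sum.cong) auto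

lemma triangular_system_solvable:
  fixes B :: "nat \<Rightarrow> nat \<Rightarrow> nat \<Rightarrow> bit" and e :: "nat \<Rightarrow> nat \<Rightarrow> bit"
  assumes "finite T"
  shows "\<exists>x. (\<forall>j. j \<notin> T \<longrightarrow> x j = u j) \<and> (\<forall>k\<in>T. lta_var (B k) (e k) k x = w k)"
  using assms
proof (induction T rule: finite_linorder_max_induct)
  \<comment> \<open>the equation of the largest unknown involves only smaller coordinates, solved earlier\<close>
  case empty
  show ?case by auto
next
  case (insert b T)
  then obtain x where x: "\<forall>j. j \<notin> T \<longrightarrow> x j = u j" "\<forall>k\<in>T. lta_var (B k) (e k) k x = w k"
    by blast
  define x' where "x' = x(b := w b + lta_shift (B b) (e b) b x)"
  have below: "x' j = x j" if "j < b" for j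
    using that unfolding x'_def by simp
  have "lta_var (B k) (e k) k x' = w k" if "k \<in> T" for k
  proof -
    have "lta_var (B k) (e k) k x' = lta_var (B k) (e k) k x"
      using insert.hyps(2) that by (intro lta_var_cong_below below) fastforce
    then show ?thesis using x(2) that by simp
  qed
  moreover have "lta_shift (B b) (e b) b x' = lta_shift (B b) (e b) b x"
    unfolding lta_shift_def using below by (auto intro!: sum.cong)
  then have "lta_var (B b) (e b) b x' = w b"
    unfolding lta_var_def x'_def by (simp add: add.assoc)
  moreover have "\<forall>j. j \<notin> insert b T \<longrightarrow> x' j = u j"
    using x(1) unfolding x'_def by simp
  ultimately show ?case by blast
qed

lemma pts_if_agree_outside:
  assumes "x \<in> pts m" "S \<subseteq> {..<m}" "\<forall>j. j \<notin> S \<longrightarrow> y j = x j"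
  shows "y \<in> pts m"
  unfolding pts_def
proof (intro CollectI allI impI)
  fix i assume "m \<le> i"
  then have "i \<notin> S" "x i = 0"
    using assms(1,2) unfolding pts_def by auto
  then show "y i = 0"
    using assms(3) by simp
qed

lemma pts_add3: "x \<in> pts m \<Longrightarrow> y \<in> pts m \<Longrightarrow> z \<in> pts m \<Longrightarrow> (\<lambda>j. x j + y j + z j) \<in> pts m"
  unfolding pts_def by simp

lemma act_eq_1_iff:
  assumes "finite h" "x \<in> pts m"
  shows "act m (B, e) h x = 1 \<longleftrightarrow> (\<forall>i\<in>h. x i = 1 + lta_shift B e i x)"
proof -
  have add_eq_1: "a + c = 1 \<longleftrightarrow> a = 1 + c" for a c :: bit
    by (cases a; cases c) auto
  have "act m (B, e) h x = 1 \<longleftrightarrow> (\<forall>i\<in>h. x i + lta_shift B e i x = 1)"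
    using assms unfolding act_eq_prod_lta_var canon_def lta_var_def
    by (simp add: prod_bit_eq_1_iff)
  then show ?thesis
    by (simp only: add_eq_1)
qed

lemma ex_act_eq_1_agree_outside:
  assumes "(B, e) \<in> LTA_sub m h" "finite h" "h \<subseteq> {..<m}" "x \<in> pts m"
  shows "\<exists>y\<in>pts m. (\<forall>j. j \<notin> h \<longrightarrow> y j = x j) \<and> act m (B, e) h y = 1"
proof -
  define y where "y j = (if j \<in> h then 1 + lta_shift B e j x else x j)" for j
  have outside: "\<forall>j. j \<notin> h \<longrightarrow> y j = x j"
    unfolding y_def by simp
  have y: "y \<in> pts m"
    using pts_if_agree_outside[OF assms(4,3) outside] .
  have "lta_shift B e i y = lta_shift B e i x" for i
    using lta_shift_cong_outside[OF assms(1)] outside by metis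
  then have "\<forall>i\<in>h. y i = 1 + lta_shift B e i y"
    unfolding y_def by simp
  then show ?thesis
    using outside y act_eq_1_iff[OF assms(2) y] by blast
qed

definition free_of :: "nat \<Rightarrow> nat set \<Rightarrow> relt \<Rightarrow> bool" where
  "free_of m h t \<longleftrightarrow>
     (\<forall>x\<in>pts m. \<forall>y\<in>pts m. (\<forall>j. j \<notin> h \<longrightarrow> x j = y j) \<longrightarrow> t x = t y)"

lemma free_ofD:
  "free_of m h t \<Longrightarrow> x \<in> pts m \<Longrightarrow> y \<in> pts m \<Longrightarrow> \<forall>j. j \<notin> h \<longrightarrow> x j = y j \<Longrightarrow> t x = t y"
  unfolding free_of_def by blast

lemma free_of_add:
  assumes "free_of m h s" "free_of m h t"
  shows "free_of m h (\<lambda>x. s x + t x)"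
  unfolding free_of_def
proof (intro ballI impI)
  fix x y assume "x \<in> pts m" "y \<in> pts m" "\<forall>j. j \<notin> h \<longrightarrow> x j = y j"
  then have "s x = s y" "t x = t y"
    using free_ofD[OF assms(1)] free_ofD[OF assms(2)] by blast+
  then show "s x + t x = s y + t y"
    by simp
qed

lemma free_of_act:
  assumes "(B, e) \<in> LTA_sub m S" "h \<subseteq> S" "u \<inter> h = {}"
  shows "free_of m h (act m (B, e) u)"
  unfolding free_of_def
proof (intro ballI impI)
  fix x y assume "x \<in> pts m" "y \<in> pts m" and outside: "\<forall>j. j \<notin> h \<longrightarrow> x j = y j"
  have "lta_var B e i x = lta_var B e i y" if "i \<in> u" for i
  proof -
    have "i \<notin> h" "\<forall>j. j \<notin> S \<longrightarrow> x j = y j"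
      using that assms(2,3) outside by auto
    then show ?thesis
      unfolding lta_var_def using outside lta_shift_cong_outside[OF assms(1)] by simp
  qed
  then show "act m (B, e) u x = act m (B, e) u y"
    using \<open>x \<in> pts m\<close> \<open>y \<in> pts m\<close> unfolding act_eq_prod_lta_var canon_def by simp
qed

lemma orbit_mult_eq_on_support:
  assumes "finite h" "h \<subseteq> {..<m}" "(B, e) \<in> LTA_sub m h" "(B', e') \<in> LTA_sub m h"
    and "free_of m h t" "free_of m h t'"
    and mult_eq: "\<And>x. act m (B, e) h x * t x = act m (B', e') h x * t' x"
    and "x \<in> pts m" "t x = 1"
  shows "t' x = 1" "\<forall>i\<in>h. lta_shift B e i x = lta_shift B' e' i x"
proof -
  obtain y where y: "y \<in> pts m" "\<forall>j. j \<notin> h \<longrightarrow> y j = x j" "act m (B, e) h y = 1"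
    using ex_act_eq_1_agree_outside[OF assms(3,1,2,8)] by blast
  have "t y = 1"
    using free_ofD[OF assms(5) y(1) assms(8) y(2)] assms(9) by simp
  then have "act m (B', e') h y = 1" "t' y = 1"
    using mult_eq[of y] y(3) by (simp_all add: bit_mult_eq_1_iff)
  then show "t' x = 1"
    using free_ofD[OF assms(6) y(1) assms(8) y(2)] by simp
  have "lta_shift B e i x = lta_shift B' e' i x" if "i \<in> h" for i
  proof -
    have "y i = 1 + lta_shift B e i y" "y i = 1 + lta_shift B' e' i y"
      using act_eq_1_iff[OF assms(1) y(1)] y(3) \<open>act m (B', e') h y = 1\<close> that by blast+
    then have "lta_shift B e i y = lta_shift B' e' i y"
      by (metis add.left_cancel)
    then show ?thesis
      using lta_shift_cong_outside[OF assms(3) y(2)] lta_shift_cong_outside[OF assms(4) y(2)] by simp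
  qed
  then show "\<forall>i\<in>h. lta_shift B e i x = lta_shift B' e' i x" ..
qed

text \<open>Over F_2 an affine form f satisfies f (x + y + z) = f x + f y + f z, so it is determined by
  its values on any set whose sums of three elements cover the whole space.\<close>

definition support_spans :: "nat \<Rightarrow> relt \<Rightarrow> bool" where
  "support_spans m t \<longleftrightarrow>
     (\<forall>u\<in>pts m. \<exists>x\<in>pts m. \<exists>y\<in>pts m. t x = 1 \<and> t y = 1 \<and> t (\<lambda>j. x j + y j + u j) = 1)"

lemma lta_shift_eq_if_eq_on_support:
  assumes "support_spans m t"
    and on_support: "\<And>x. x \<in> pts m \<Longrightarrow> t x = 1 \<Longrightarrow> lta_shift B e i x = lta_shift B' e' i x"
    and "u \<in> pts m"
  shows "lta_shift B e i u = lta_shift B' e' i u"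
proof -
  obtain x y where xy: "x \<in> pts m" "y \<in> pts m" "t x = 1" "t y = 1"
    and xyu: "t (\<lambda>j. x j + y j + u j) = 1"
    using assms(1,3) unfolding support_spans_def by blast
  define z where "z = (\<lambda>j. x j + y j + u j)"
  have z: "z \<in> pts m" "t z = 1"
    unfolding z_def using pts_add3[OF xy(1,2) assms(3)] xyu by simp_all
  have "u = (\<lambda>j. x j + y j + z j)"
    unfolding z_def by (simp add: bit_add_cancel_left)
  then have "lta_shift B e i u = lta_shift B e i x + lta_shift B e i y + lta_shift B e i z"
    "lta_shift B' e' i u = lta_shift B' e' i x + lta_shift B' e' i y + lta_shift B' e' i z"
    by (simp_all add: lta_shift_add3)
  then show ?thesis
    using on_support[OF xy(1,3)] on_support[OF xy(2,4)] on_support[OF z] by simp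
qed

lemma inj_on_orbit_mult:
  assumes "finite h" "h \<subseteq> {..<m}"
    and T: "\<And>t. t \<in> T \<Longrightarrow> (\<forall>x. x \<notin> pts m \<longrightarrow> t x = 0) \<and> free_of m h t \<and> support_spans m t"
  shows "inj_on (\<lambda>(s, t) x. s x * t x) (orbit m (LTA_sub m h) h \<times> T)"
proof (rule inj_onI)
  fix p p' assume "p \<in> orbit m (LTA_sub m h) h \<times> T" "p' \<in> orbit m (LTA_sub m h) h \<times> T"
    and p_eq: "(\<lambda>(s, t) x. s x * t x) p = (\<lambda>(s, t) x. s x * t x) p'"
  then obtain B e B' e' t t' where p: "p = (act m (B, e) h, t)" "p' = (act m (B', e') h, t')"
    and Be: "(B, e) \<in> LTA_sub m h" "(B', e') \<in> LTA_sub m h" and "t \<in> T" "t' \<in> T"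
    unfolding orbit_def by auto
  have mult_eq: "act m (B, e) h x * t x = act m (B', e') h x * t' x" for x
    using fun_cong[OF p_eq, of x] unfolding p by simp
  from T[OF \<open>t \<in> T\<close>] T[OF \<open>t' \<in> T\<close>]
  have zero: "\<forall>x. x \<notin> pts m \<longrightarrow> t x = 0" "\<forall>x. x \<notin> pts m \<longrightarrow> t' x = 0"
    and free: "free_of m h t" "free_of m h t'" and spans: "support_spans m t"
    by blast+
  note on_support = orbit_mult_eq_on_support[OF assms(1,2) Be(1,2) free mult_eq]
    and on_support' = orbit_mult_eq_on_support[OF assms(1,2) Be(2,1) free(2,1) mult_eq[symmetric]]
  have "t x = t' x" for x
  proof (cases "x \<in> pts m")
    case True
    then show ?thesis
      using on_support(1) on_support'(1) by (intro bit_eqI) blast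
  next
    case False
    then show ?thesis
      using zero by simp
  qed
  moreover have "lta_shift B e i u = lta_shift B' e' i u" if "i \<in> h" "u \<in> pts m" for i u
    using lta_shift_eq_if_eq_on_support[OF spans _ that(2)] on_support(2) that(1) by blast
  then have "act m (B, e) h = act m (B', e') h"
    unfolding act_eq_prod_lta_var canon_def lta_var_def by (auto intro!: prod.cong)
  ultimately show "p = p'"
    unfolding p by auto
qed

text \<open>The quadric y_1 y_2 + y_3 y_4 equals 1 at (0,0,1,1), at q and at (0,0,1,1) + q + c.\<close>

lemma bit_quadric_three_points:
  "\<exists>q1 q2 q3 q4 :: bit. q1 * q2 + q3 * q4 = 1 \<and>
     (q1 + c1) * (q2 + c2) + (q3 + 1 + c3) * (q4 + 1 + c4) = 1"
proof -
  have ex_bit: "(\<exists>q::bit. P q) \<longleftrightarrow> P 0 \<or> P 1" for P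
    by (metis bit_not_one_iff)
  show ?thesis
    by (cases c1; cases c2; cases c3; cases c4) (simp_all only: ex_bit, simp_all)
qed

lemma support_spans_quadric:
  assumes distinct: "distinct [a1, a2, b1, b2]" and "{a1, a2, b1, b2} \<subseteq> {..<m}"
  shows "support_spans m (\<lambda>x. act m (B1, e1) {a1, a2} x + act m (B2, e2) {b1, b2} x)"
  unfolding support_spans_def
proof
  fix u assume u: "u \<in> pts m"
  define T where "T = {a1, a2, b1, b2}"
  define B where "B k = (if k \<in> {a1, a2} then B1 else B2)" for k
  define e where "e k = (if k \<in> {a1, a2} then e1 else e2)" for k
  define l where "l k x = lta_var (B k) (e k) k x" for k x
  have quadric: "act m (B1, e1) {a1, a2} x + act m (B2, e2) {b1, b2} x
      = l a1 x * l a2 x + l b1 x * l b2 x" if "x \<in> pts m" for x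
    using that distinct unfolding act_eq_prod_lta_var canon_def l_def B_def e_def by simp
  obtain q1 q2 q3 q4 where q: "q1 * q2 + q3 * q4 = 1"
    "(q1 + l a1 u) * (q2 + l a2 u) + (q3 + 1 + l b1 u) * (q4 + 1 + l b2 u) = 1"
    using bit_quadric_three_points[of "l a1 u" "l a2 u" "l b1 u" "l b2 u"] by blast
  have "finite T"
    unfolding T_def by simp
  obtain x where x: "\<forall>j. j \<notin> T \<longrightarrow> x j = u j"
    "\<forall>k\<in>T. l k x = (if k = b1 \<or> k = b2 then 1 else 0)"
    using triangular_system_solvable[OF \<open>finite T\<close>, of u B e "\<lambda>k. if k = b1 \<or> k = b2 then 1 else 0"]
    unfolding l_def by blast
  obtain y where y: "\<forall>j. j \<notin> T \<longrightarrow> y j = u j"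
    "\<forall>k\<in>T. l k y = (if k = a1 then q1 else if k = a2 then q2 else if k = b1 then q3 else q4)"
    using triangular_system_solvable[OF \<open>finite T\<close>, of u B e
        "\<lambda>k. if k = a1 then q1 else if k = a2 then q2 else if k = b1 then q3 else q4"]
    unfolding l_def by blast
  have lx: "l a1 x = 0" "l a2 x = 0" "l b1 x = 1" "l b2 x = 1"
    using x(2) distinct unfolding T_def by auto
  have ly: "l a1 y = q1" "l a2 y = q2" "l b1 y = q3" "l b2 y = q4"
    using y(2) distinct unfolding T_def by auto
  define z where "z = (\<lambda>j. x j + y j + u j)"
  have lz: "l k z = l k x + l k y + l k u" for k
    unfolding l_def z_def by (rule lta_var_add3)
  have "T \<subseteq> {..<m}"
    unfolding T_def using assms(2) .
  then have "x \<in> pts m" "y \<in> pts m"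
    using pts_if_agree_outside[OF u] x(1) y(1) by blast+
  then have xyz: "x \<in> pts m" "y \<in> pts m" "z \<in> pts m"
    unfolding z_def using pts_add3[OF _ _ u] by blast+
  have "act m (B1, e1) {a1, a2} x + act m (B2, e2) {b1, b2} x = 1"
    unfolding quadric[OF xyz(1)] lx by simp
  moreover have "act m (B1, e1) {a1, a2} y + act m (B2, e2) {b1, b2} y = 1"
    unfolding quadric[OF xyz(2)] ly by (rule q(1))
  moreover have "act m (B1, e1) {a1, a2} z + act m (B2, e2) {b1, b2} z = 1"
    unfolding quadric[OF xyz(3)] lz lx ly using q(2) by (simp add: ac_simps)
  ultimately show "\<exists>x\<in>pts m. \<exists>y\<in>pts m.
      act m (B1, e1) {a1, a2} x + act m (B2, e2) {b1, b2} x = 1 \<and>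
      act m (B1, e1) {a1, a2} y + act m (B2, e2) {b1, b2} y = 1 \<and>
      act m (B1, e1) {a1, a2} (\<lambda>j. x j + y j + u j) + act m (B2, e2) {b1, b2} (\<lambda>j. x j + y j + u j) = 1"
    using xyz(1,2) unfolding z_def by blast
qed

lemma set_plus_orbits_free_of_support_spans:
  assumes "h \<subseteq> f" "h \<subseteq> g" "f - h = {a1, a2}" "g - h = {b1, b2}"
    and "distinct [a1, a2, b1, b2]" "{a1, a2, b1, b2} \<subseteq> {..<m}"
    and "t \<in> set_plus (orbit m (LTA_sub m f) (f - h)) (orbit m (LTA_sub m g) (g - h))"
  shows "(\<forall>x. x \<notin> pts m \<longrightarrow> t x = 0) \<and> free_of m h t \<and> support_spans m t"
proof -
  obtain B1 e1 B2 e2 where Be: "(B1, e1) \<in> LTA_sub m f" "(B2, e2) \<in> LTA_sub m g"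
    and t: "t = (\<lambda>x. act m (B1, e1) (f - h) x + act m (B2, e2) (g - h) x)"
    using assms(7) unfolding set_plus_def orbit_def by auto
  have "free_of m h (act m (B1, e1) (f - h))" "free_of m h (act m (B2, e2) (g - h))"
    using free_of_act[OF Be(1) assms(1), of "f - h"] free_of_act[OF Be(2) assms(2), of "g - h"] by auto
  then have "free_of m h t"
    unfolding t by (rule free_of_add)
  moreover have "support_spans m t"
    unfolding t assms(3,4) using support_spans_quadric[OF assms(5,6)] .
  moreover have "\<forall>x. x \<notin> pts m \<longrightarrow> t x = 0"
    unfolding t act_def canon_def by simp
  ultimately show ?thesis
    by blast
qed

lemma set_times_eq_image: "set_times S T = (\<lambda>(s, t) x. s x * t x) ` (S \<times> T)"
  unfolding set_times_def by force

theorem lemma3: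
  fixes m r :: nat and I :: "nat set set" and f g h :: "nat set"
  assumes "m \<ge> 1"
    and "decreasing m I"
    and "I \<noteq> {}"
    and "r = Max (card ` I)"
    and "f \<in> I" and "card f = r"
    and "g \<in> I" and "card g = r"
    and "h = f \<inter> g"
    and "card h + 2 = r"
  shows "card (set_times (orbit m (LTA_sub m h) h)
                 (set_plus (orbit m (LTA_sub m f) (f - h)) (orbit m (LTA_sub m g) (g - h))))
       = card (orbit m (LTA_sub m h) h)
         * card (set_plus (orbit m (LTA_sub m f) (f - h)) (orbit m (LTA_sub m g) (g - h)))"
proof -
  \<comment> \<open>only the degrees card f = card g = card h + 2 matter\<close>
  have fg: "f \<subseteq> {..<m}" "g \<subseteq> {..<m}"
    using assms(2,5,7) unfolding decreasing_def monomials_def by (auto simp: atLeast0LessThan)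
  have h: "h \<subseteq> f" "h \<subseteq> g" "finite h" "h \<subseteq> {..<m}"
    using assms(9) fg finite_subset[OF _ finite_lessThan] by auto
  have "card (f - h) = 2" "card (g - h) = 2"
    using card_Diff_subset[OF h(3)] h(1,2) assms(6,8,10) by auto
  then obtain a1 a2 b1 b2 where ab: "f - h = {a1, a2}" "a1 \<noteq> a2" "g - h = {b1, b2}" "b1 \<noteq> b2"
    unfolding card_2_iff by blast
  moreover have "{a1, a2} \<inter> {b1, b2} = {}"
    using ab(1,3) assms(9) by blast
  ultimately have "distinct [a1, a2, b1, b2]" "{a1, a2, b1, b2} \<subseteq> {..<m}"
    using fg by auto
  then have inj: "inj_on (\<lambda>(s, t) x. s x * t x) (orbit m (LTA_sub m h) h \<times>
      set_plus (orbit m (LTA_sub m f) (f - h)) (orbit m (LTA_sub m g) (g - h)))"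
    by (intro inj_on_orbit_mult[OF h(3,4)] set_plus_orbits_free_of_support_spans[OF h(1,2) ab(1,3)])
  show ?thesis
    unfolding set_times_eq_image card_image[OF inj] by (rule card_cartesian_product)
qed

end
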